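(* Let $A,B,D>0$ be constants, let $\lambda\in\mathbb{R}$, and let $f:(0,\infty)\to\mathbb{R}$ be defined by $$f(X)=A(2DX)^{-1/2}-B(2DX)^{-3/2}.$$ Let $\alpha>0$, $\beta>0$, and let $g:(0,\infty)\to(-\infty,0]$ be given by $g(X)=-\beta X^{\alpha}$. Let $V_\lambda:(0,\infty)\to\mathbb{R}$ be a potential satisfying $-V_\lambda'(X)=\lambda-f(X)+g(X)$ for all $X>0$ (i.e. $V_\lambda$ is an antiderivative of $-(\lambda-f+g)$, determined up to an additive constant). Then $V_\lambda$ is confining, that is, $$\lim_{X\to0^+}V_\lambda(X)=\lim_{X\to\infty}V_\lambda(X)=+\infty,$$ and for every $\xi>0$, $$\int_0^\infty e^{-\xi V_\lambda(X)}\,dX<\infty.$$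
   Context: This potential governs the stochastic droplet growth model $\dot X=\lambda-f(X)+g(X)+\sigma(X)\dot W_t$, where $X=r^2/(2D)$ is the scaled squared droplet radius, $f$ is the Köhler curve, $g$ a sink term, and $W_t$ a Brownian motion. *)

theory Defs
  imports "HOL-Analysis.Analysis"
begin

end

theory Submission
  imports Defs "HOL-Real_Asymp.Real_Asymp"
begin

text \<open>
  Integrating the drift gives the potential up to a constant:
  \<open>V X = k - lam X + a X powr (1/2) + b X powr (-1/2) + c X powr (\<alpha> + 1)\<close> with \<open>a, b, c > 0\<close>.
  The term \<open>b X powr (-1/2)\<close>, coming from the solute term \<open>-B (2 D X) powr (-3/2)\<close> of \<open>f\<close>,
  blows up at \<open>0\<close>, and the term \<open>c X powr (\<alpha> + 1)\<close> coming from the sink dominates at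
  infinity. Hence even \<open>\<xi> V X - X\<close> tends to \<open>+\<infinity>\<close> at both ends; being continuous, it is
  bounded below on \<open>{0<..}\<close>, so \<open>exp (- \<xi> V X)\<close> is dominated by a multiple of \<open>exp (- X)\<close>.
\<close>

lemma same_derivative_imp_const_offset:
  fixes V W :: "real \<Rightarrow> real"
  assumes "convex S"
    and "\<And>x. x \<in> S \<Longrightarrow> (V has_real_derivative d x) (at x)"
    and "\<And>x. x \<in> S \<Longrightarrow> (W has_real_derivative d x) (at x)"
  shows "\<exists>k. \<forall>x\<in>S. V x = k + W x"
proof -
  have "\<exists>k. \<forall>x\<in>S. V x - W x = k"
  proof (rule has_field_derivative_zero_constant[OF \<open>convex S\<close>])
    fix x assume "x \<in> S"
    from DERIV_diff[OF assms(2,3)[OF this]]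
    show "((\<lambda>x. V x - W x) has_real_derivative 0) (at x within S)"
      by (simp add: has_field_derivative_at_within)
  qed
  then show ?thesis
    by (metis add.commute diff_add_cancel)
qed

lemma continuous_on_pos_reals_bounded_below:
  fixes U :: "real \<Rightarrow> real"
  assumes cont: "continuous_on {0<..} U"
    and at_0: "filterlim U at_top (at_right 0)" and at_infty: "filterlim U at_top at_top"
  shows "\<exists>L. \<forall>x>0. L \<le> U x"
proof -
  obtain d where "d > 0" and near_0: "\<And>x. 0 < x \<Longrightarrow> x < d \<Longrightarrow> 0 \<le> U x"
    using at_0 unfolding filterlim_at_top eventually_at_right_field by blast
  obtain M where near_infty: "\<And>x. M \<le> x \<Longrightarrow> 0 \<le> U x"
    using at_infty unfolding filterlim_at_top eventually_at_top_linorder by blast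
  have "continuous_on {d..max M d} U"
    by (rule continuous_on_subset[OF cont]) (use \<open>d > 0\<close> in auto)
  then obtain y where min_y: "\<forall>z\<in>{d..max M d}. U y \<le> U z"
    using continuous_attains_inf[of "{d..max M d}" U] by auto
  have "min 0 (U y) \<le> U x" if "x > 0" for x
  proof -
    consider "x < d" | "M \<le> x" | "x \<in> {d..max M d}"
      by fastforce
    then show ?thesis
      by cases (use near_0 near_infty min_y \<open>x > 0\<close> in fastforce)+
  qed
  then show ?thesis
    by blast
qed

lemma set_integrable_exp_neg_pos_reals:
  "set_integrable lborel {0::real<..} (\<lambda>x. exp (- x))"
proof -
  have "(\<lambda>x::real. exp (- 1 * x)) integrable_on {0..}"
    by (rule integrable_on_exp_minus_to_infinity) simp
  then have "set_integrable lebesgue {0::real..} (\<lambda>x. exp (- x))"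
    by (intro nonnegative_absolutely_integrable_1) auto
  then have "set_integrable lborel {0::real..} (\<lambda>x. exp (- x))"
    unfolding set_integrable_def by (subst (asm) integrable_completion) auto
  then show ?thesis
    by (rule set_integrable_subset) auto
qed

lemma set_integrable_exp_neg_if_superlinear:
  fixes U :: "real \<Rightarrow> real"
  assumes cont: "continuous_on {0<..} U"
    and "filterlim (\<lambda>x. U x - x) at_top (at_right 0)"
    and "filterlim (\<lambda>x. U x - x) at_top at_top"
  shows "set_integrable lborel {0<..} (\<lambda>x. exp (- U x))"
proof -
  have "continuous_on {0<..} (\<lambda>x. U x - x)"
    by (intro continuous_intros cont)
  then obtain L where L: "\<And>x. x > 0 \<Longrightarrow> L \<le> U x - x"
    using continuous_on_pos_reals_bounded_below assms(2,3) by blast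
  show ?thesis
  proof (rule set_integrable_bound)
    show "set_integrable lborel {0<..} (\<lambda>x. exp (- L) * exp (- x))"
      using set_integrable_exp_neg_pos_reals by simp
    show "set_borel_measurable lborel {0<..} (\<lambda>x. exp (- U x))"
      unfolding set_borel_measurable_def
      using borel_measurable_continuous_on_indicator[of "{0<..}" "\<lambda>x. exp (- U x)"]
      by (simp add: continuous_intros cont)
    have "exp (- U x) \<le> exp (- L) * exp (- x)" if "x > 0" for x
      using L[OF that] by (simp flip: exp_add)
    then show "AE x in lborel. x \<in> {0<..} \<longrightarrow> norm (exp (- U x)) \<le> norm (exp (- L) * exp (- x))"
      by simp
  qed
qed

lemma filterlim_at_top_if_superlinear:
  fixes U :: "real \<Rightarrow> real"
  assumes "filterlim (\<lambda>x. U x - x) at_top F" and "\<forall>\<^sub>F x in F. x > 0"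
  shows "filterlim U at_top F"
proof (rule filterlim_at_top_mono[OF assms(1)])
  show "\<forall>\<^sub>F x in F. U x - x \<le> U x"
    using assms(2) by eventually_elim simp
qed

lemma kohler_sink_primitive_has_derivative:
  fixes A B D lam \<alpha> \<beta> x :: real
  assumes "D > 0" and "\<alpha> + 1 \<noteq> 0" and "x > 0"
  shows "((\<lambda>x. - lam * x + 2 * A * (2 * D) powr (-1/2) * x powr (1/2)
            + 2 * B * (2 * D) powr (-3/2) * x powr (-1/2) + \<beta> / (\<alpha> + 1) * x powr (\<alpha> + 1))
          has_real_derivative
            - (lam - (A * (2 * D * x) powr (-1/2) - B * (2 * D * x) powr (-3/2)) + - \<beta> * x powr \<alpha>))
         (at x)"
proof -
  have drift_eq: "- lam * 1 + 2 * A * (2 * D) powr (-1/2) * ((1/2) * x powr (1/2 - 1))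
      + 2 * B * (2 * D) powr (-3/2) * ((-1/2) * x powr (-1/2 - 1))
      + \<beta> / (\<alpha> + 1) * ((\<alpha> + 1) * x powr (\<alpha> + 1 - 1))
    = - (lam - (A * (2 * D * x) powr (-1/2) - B * (2 * D * x) powr (-3/2)) + - \<beta> * x powr \<alpha>)"
    using assms by (simp add: powr_mult)
  have deriv: "((\<lambda>x. - lam * x + 2 * A * (2 * D) powr (-1/2) * x powr (1/2)
            + 2 * B * (2 * D) powr (-3/2) * x powr (-1/2) + \<beta> / (\<alpha> + 1) * x powr (\<alpha> + 1))
      has_real_derivative
        - lam * 1 + 2 * A * (2 * D) powr (-1/2) * ((1/2) * x powr (1/2 - 1))
        + 2 * B * (2 * D) powr (-3/2) * ((-1/2) * x powr (-1/2 - 1))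
        + \<beta> / (\<alpha> + 1) * ((\<alpha> + 1) * x powr (\<alpha> + 1 - 1))) (at x)"
    using \<open>x > 0\<close> by (intro DERIV_add DERIV_cmult has_real_derivative_powr DERIV_ident)
  show ?thesis
    using deriv by (simp only: drift_eq)
qed

lemma kohler_sink_potential_eq:
  fixes A B D lam \<alpha> \<beta> :: real and f g V :: "real \<Rightarrow> real"
  assumes "D > 0" and "\<alpha> + 1 \<noteq> 0"
    and hf: "\<And>X. X > 0 \<Longrightarrow> f X = A * (2 * D * X) powr (-1/2) - B * (2 * D * X) powr (-3/2)"
    and hg: "\<And>X. X > 0 \<Longrightarrow> g X = - \<beta> * X powr \<alpha>"
    and V_deriv: "\<And>X. X > 0 \<Longrightarrow> (V has_real_derivative (- (lam - f X + g X))) (at X)"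
  obtains k where "\<And>x. x > 0 \<Longrightarrow> V x = k + (- lam * x + 2 * A * (2 * D) powr (-1/2) * x powr (1/2)
      + 2 * B * (2 * D) powr (-3/2) * x powr (-1/2) + \<beta> / (\<alpha> + 1) * x powr (\<alpha> + 1))"
proof -
  have "(V has_real_derivative - (lam - f x + g x)) (at x)"
    and "((\<lambda>x. - lam * x + 2 * A * (2 * D) powr (-1/2) * x powr (1/2)
            + 2 * B * (2 * D) powr (-3/2) * x powr (-1/2) + \<beta> / (\<alpha> + 1) * x powr (\<alpha> + 1))
          has_real_derivative - (lam - f x + g x)) (at x)" if "x \<in> {0<..}" for x
    using that V_deriv kohler_sink_primitive_has_derivative[OF \<open>D > 0\<close> \<open>\<alpha> + 1 \<noteq> 0\<close>, of x lam A B \<beta>]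
    by (simp_all add: hf hg)
  from same_derivative_imp_const_offset[OF convex_real_interval(3)[of 0] this]
  show thesis
    by (metis greaterThan_iff that)
qed

lemma kohler_sink_potential_superlinear:
  fixes a b c \<alpha> \<xi> k lam :: real and V :: "real \<Rightarrow> real"
  assumes "\<alpha> > 0" "a > 0" "b > 0" "c > 0" "\<xi> > 0"
    and V: "\<And>x. x > 0 \<Longrightarrow> V x = k + (- lam * x + a * x powr (1/2) + b * x powr (-1/2)
      + c * x powr (\<alpha> + 1))"
  shows "filterlim (\<lambda>x. \<xi> * V x - x) at_top (at_right 0)"
    and "filterlim (\<lambda>x. \<xi> * V x - x) at_top at_top"
proof -
  define W where "W x = \<xi> * (k + (- lam * x + a * x powr (1/2) + b * x powr (-1/2)
      + c * x powr (\<alpha> + 1))) - x" for x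
  have eq: "\<forall>\<^sub>F x in F. W x = \<xi> * V x - x" if "\<forall>\<^sub>F x in F. x > 0" for F
    using that by eventually_elim (simp add: V W_def)
  have "filterlim W at_top (at_right 0)"
    unfolding W_def using assms(1-5) by real_asymp
  then show "filterlim (\<lambda>x. \<xi> * V x - x) at_top (at_right 0)"
    using filterlim_cong[OF refl refl eq[OF eventually_at_right_less]] by simp
  have "filterlim W at_top at_top"
    unfolding W_def using assms(1-5) by real_asymp
  then show "filterlim (\<lambda>x. \<xi> * V x - x) at_top at_top"
    using filterlim_cong[OF refl refl eq[OF eventually_gt_at_top]] by simp
qed

theorem proposition2:
  fixes A B D lam \<alpha> \<beta> :: real
    and f g V :: "real \<Rightarrow> real"
  assumes "A > 0" and "B > 0" and "D > 0"
    and "\<alpha> > 0" and "\<beta> > 0"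
    and hf: "\<And>X. X > 0 \<Longrightarrow> f X = A * (2 * D * X) powr (-1/2) - B * (2 * D * X) powr (-3/2)"
    and hg: "\<And>X. X > 0 \<Longrightarrow> g X = - \<beta> * X powr \<alpha>"
    and V_deriv: "\<And>X. X > 0 \<Longrightarrow> (V has_real_derivative (- (lam - f X + g X))) (at X)"
  shows "filterlim V at_top (at_right 0) \<and> filterlim V at_top at_top \<and>
         (\<forall>\<xi>::real. \<xi> > 0 \<longrightarrow> set_integrable lborel {0<..} (\<lambda>X. exp (- \<xi> * V X)))"
proof -
  have "\<alpha> + 1 \<noteq> 0"
    using \<open>\<alpha> > 0\<close> by simp
  then obtain k where V: "\<And>x. x > 0 \<Longrightarrow> V x = k + (- lam * x + 2 * A * (2 * D) powr (-1/2) * x powr (1/2)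
      + 2 * B * (2 * D) powr (-3/2) * x powr (-1/2) + \<beta> / (\<alpha> + 1) * x powr (\<alpha> + 1))"
    using kohler_sink_potential_eq[OF \<open>D > 0\<close> _ hf hg V_deriv] by blast
  have coeffs: "2 * A * (2 * D) powr (-1/2) > 0" "2 * B * (2 * D) powr (-3/2) > 0" "\<beta> / (\<alpha> + 1) > 0"
    using assms by simp_all
  note superlinear = kohler_sink_potential_superlinear[OF \<open>\<alpha> > 0\<close> coeffs _ V]
  have "continuous_on {0<..} V"
    using V_deriv DERIV_isCont by (intro continuous_at_imp_continuous_on) auto
  then have "set_integrable lborel {0<..} (\<lambda>X. exp (- \<xi> * V X))" if "\<xi> > 0" for \<xi>
    using set_integrable_exp_neg_if_superlinear[of "\<lambda>x. \<xi> * V x"] superlinear[OF that]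
    by (simp add: continuous_intros)
  moreover have "filterlim V at_top (at_right 0)"
    by (rule filterlim_at_top_if_superlinear[OF _ eventually_at_right_less])
      (use superlinear(1)[of 1] in simp)
  moreover have "filterlim V at_top at_top"
    by (rule filterlim_at_top_if_superlinear[OF _ eventually_gt_at_top])
      (use superlinear(2)[of 1] in simp)
  ultimately show ?thesis
    by blast
qed

end
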